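(* For each $k\in\mathbb{N}$ let $S_k$ be a nonempty set of setfunctions on $(\,[k],2^{[k]})$, and assume that $S=\bigcup_k S_k$ is quotient-closed and has the common lift property. Then there are setfunctions $\varphi_k\in S_k$ ($k\in\mathbb{N}$) such that $(\varphi_n\colon n\in\mathbb{N})$ is a tower and, for every $k$, $\bigcup_n Q_k(\varphi_n)$ is a dense subset of $S_k$.
   Context: A setfunction on a set-algebra $(J,\mathcal{B})$ is a map $\varphi\colon\mathcal{B}\to\mathbb{R}$ with $\varphi(\emptyset)=0$; $[k]=\{1,\dots,k\}$, $\mathbb{N}$ the positive integers. For a measurable map $F\colon J\to[k]$, the quotient $\varphi\circ F^{-1}$ is the setfunction $A\mapsto\varphi(F^{-1}(A))$ on $2^{[k]}$; $Q_k(\varphi)\subseteq\mathbb{R}^{2^k}$ is the set of all quotients of $\varphi$ on $[k]$. $\varphi$ is a lift of $\varphi'$ if $\varphi'$ is a quotient of $\varphi$. A family $A$ of finite setfunctions is quotient-closed if every quotient of a member of $A$ is in $A$, and has the common lift property if every finite subset of $A$ has a common lift in $A$. A tower is a sequence $(\varphi_n)$ of setfunctions on finite set-algebras $(J_n,2^{J_n})$ such that $\varphi_n$ is a quotient of $\varphi_{n+1}$ for every $n$. Density is with respect to the Euclidean topology of $\mathbb{R}^{2^k}$. *)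

theory Defs
  imports Complex_Main
begin

text \<open>A setfunction on ([k], 2^[k]) is represented as a function on nat sets that
vanishes on the empty set and on every set not contained in {1..k}
(so that only its values on subsets of [k] carry information).\<close>
definition setfun :: "nat \<Rightarrow> (nat set \<Rightarrow> real) \<Rightarrow> bool" where
  "setfun k \<phi> \<longleftrightarrow> \<phi> {} = 0 \<and> (\<forall>A. \<not> A \<subseteq> {1..k} \<longrightarrow> \<phi> A = 0)"

definition quot :: "nat \<Rightarrow> nat \<Rightarrow> (nat \<Rightarrow> nat) \<Rightarrow> (nat set \<Rightarrow> real) \<Rightarrow> (nat set \<Rightarrow> real)" where
  "quot n k F \<phi> = (\<lambda>A. if A \<subseteq> {1..k} then \<phi> {i \<in> {1..n}. F i \<in> A} else 0)"

definition is_quotient :: "nat \<Rightarrow> (nat set \<Rightarrow> real) \<Rightarrow> nat \<Rightarrow> (nat set \<Rightarrow> real) \<Rightarrow> bool" where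
  "is_quotient n \<phi> k \<psi> \<longleftrightarrow> (\<exists>F. (\<forall>i\<in>{1..n}. F i \<in> {1..k}) \<and> \<psi> = quot n k F \<phi>)"

definition Qk :: "nat \<Rightarrow> nat \<Rightarrow> (nat set \<Rightarrow> real) \<Rightarrow> (nat set \<Rightarrow> real) set" where
  "Qk k n \<phi> = {\<psi>. is_quotient n \<phi> k \<psi>}"

text \<open>The family S = union of the S_k (disjoint union, indexed by k) is quotient-closed.\<close>
definition quotient_closed :: "(nat \<Rightarrow> (nat set \<Rightarrow> real) set) \<Rightarrow> bool" where
  "quotient_closed S \<longleftrightarrow>
     (\<forall>n\<ge>1. \<forall>\<phi>\<in>S n. \<forall>k\<ge>1. \<forall>\<psi>. is_quotient n \<phi> k \<psi> \<longrightarrow> \<psi> \<in> S k)"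

definition common_lift_property :: "(nat \<Rightarrow> (nat set \<Rightarrow> real) set) \<Rightarrow> bool" where
  "common_lift_property S \<longleftrightarrow>
     (\<forall>I. finite I \<and> I \<subseteq> {(k, \<phi>). k \<ge> 1 \<and> \<phi> \<in> S k} \<longrightarrow>
        (\<exists>m\<ge>1. \<exists>\<psi>\<in>S m. \<forall>(k, \<phi>)\<in>I. is_quotient m \<psi> k \<phi>))"

definition tower :: "(nat \<Rightarrow> (nat set \<Rightarrow> real)) \<Rightarrow> bool" where
  "tower \<phi> \<longleftrightarrow> (\<forall>n\<ge>1. is_quotient (Suc n) (\<phi> (Suc n)) n (\<phi> n))"

text \<open>Density of D in S_k w.r.t. the Euclidean topology on R^(2^k) (sup-norm form).\<close>
definition dense_in_setfuns :: "nat \<Rightarrow> (nat set \<Rightarrow> real) set \<Rightarrow> (nat set \<Rightarrow> real) set \<Rightarrow> bool" where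
  "dense_in_setfuns k D T \<longleftrightarrow> D \<subseteq> T \<and>
     (\<forall>\<psi>\<in>T. \<forall>e>0. \<exists>\<chi>\<in>D. \<forall>A. A \<subseteq> {1..k} \<longrightarrow> \<bar>\<psi> A - \<chi> A\<bar> < e)"

end

theory Submission
  imports Defs "HOL-Library.Countable_Set" "HOL-Analysis.Finite_Cartesian_Product"
begin

text \<open>The common lift property yields a sparse tower (the spine) L_0, L_1, ... with L_p in
  S m_p and m_p < m_(p+1), in which L_(p+1) lifts both L_p and the p-th member of a countable
  dense family of targets. After shifting coordinates, the quotient map from L_(p+1) to L_p can
  be taken to be a retraction R of [m_(p+1)] onto [m_p]. The levels m_p \<le> n \<le> m_(p+1) are
  then filled by the quotients of L_(p+1) that keep the coordinates up to n and collapse the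
  others by R; consecutive ones differ by collapsing a single coordinate, so together they form
  a tower. Every target is a quotient of this tower, and all its quotients on [k] lie in S k by
  quotient-closedness, so density is inherited from the targets.\<close>

lemma quot_comp:
  assumes "\<forall>i\<in>{1..n}. F i \<in> {1..k}"
  shows "quot k j G (quot n k F \<phi>) = quot n j (G \<circ> F) \<phi>"
proof (rule ext)
  fix A
  have "{i \<in> {1..n}. F i \<in> {v \<in> {1..k}. G v \<in> A}} = {i \<in> {1..n}. (G \<circ> F) i \<in> A}"
    using assms by auto
  then show "quot k j G (quot n k F \<phi>) A = quot n j (G \<circ> F) \<phi> A"
    unfolding quot_def by auto
qed

lemma quot_cong:
  assumes "\<forall>i\<in>{1..n}. F i = F' i"
  shows "quot n k F \<phi> = quot n k F' \<phi>"
proof -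
  have "{i \<in> {1..n}. F i \<in> A} = {i \<in> {1..n}. F' i \<in> A}" for A
    using assms by auto
  then show ?thesis unfolding quot_def by auto
qed

lemma quot_id:
  assumes "setfun n \<phi>" "\<forall>i\<in>{1..n}. F i = i"
  shows "quot n n F \<phi> = \<phi>"
proof (rule ext)
  fix A
  show "quot n n F \<phi> A = \<phi> A"
  proof (cases "A \<subseteq> {1..n}")
    case True
    then have "{i \<in> {1..n}. F i \<in> A} = A" using assms(2) by auto
    then show ?thesis using True unfolding quot_def by auto
  next
    case False
    then show ?thesis using assms(1) unfolding quot_def setfun_def by auto
  qed
qed

lemma is_quotientI:
  assumes "\<forall>i\<in>{1..n}. F i \<in> {1..k}"
  shows "is_quotient n \<phi> k (quot n k F \<phi>)"
  using assms unfolding is_quotient_def by blast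

lemma is_quotient_trans:
  assumes "is_quotient n \<phi> k \<psi>" "is_quotient k \<psi> j \<gamma>"
  shows "is_quotient n \<phi> j \<gamma>"
proof -
  obtain F where F: "\<forall>i\<in>{1..n}. F i \<in> {1..k}" "\<psi> = quot n k F \<phi>"
    using assms(1) unfolding is_quotient_def by blast
  obtain G where G: "\<forall>i\<in>{1..k}. G i \<in> {1..j}" "\<gamma> = quot k j G \<psi>"
    using assms(2) unfolding is_quotient_def by blast
  have "\<gamma> = quot n j (G \<circ> F) \<phi>" using G(2) F quot_comp by metis
  moreover have "\<forall>i\<in>{1..n}. (G \<circ> F) i \<in> {1..j}" using F(1) G(1) by auto
  ultimately show ?thesis unfolding is_quotient_def by blast
qed

lemma quotient_closedD:
  assumes "quotient_closed S" "n \<ge> 1" "\<phi> \<in> S n" "k \<ge> 1" "is_quotient n \<phi> k \<psi>"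
  shows "\<psi> \<in> S k"
  using assms unfolding quotient_closed_def by blast

definition is_retraction :: "nat \<Rightarrow> nat \<Rightarrow> (nat \<Rightarrow> nat) \<Rightarrow> bool" where
  "is_retraction M m R \<longleftrightarrow> (\<forall>i\<in>{1..M}. R i \<in> {1..m}) \<and> (\<forall>i\<in>{1..m}. R i = i)"

text \<open>Shifting a lift L on [M] to the upper part of [m + M] leaves room for the identity
  on [m], so that the quotient map to [m] can be taken to be a retraction.\<close>
lemma retraction_lift:
  assumes closed: "quotient_closed S" and "m \<ge> 1" "M \<ge> 1" "L \<in> S M" "setfun M L"
    and "is_quotient M L m \<psi>"
  shows "\<exists>L'\<in>S (m + M). \<exists>R. is_retraction (m + M) m R \<and> \<psi> = quot (m + M) m R L' \<and>
           is_quotient (m + M) L' M L"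
proof -
  obtain F where F: "\<forall>i\<in>{1..M}. F i \<in> {1..m}" and \<psi>: "\<psi> = quot M m F L"
    using assms(6) unfolding is_quotient_def by blast
  define L' where "L' = quot M (m + M) (\<lambda>i. i + m) L"
  define R where "R j = (if j \<le> m then j else F (j - m))" for j
  define P where "P j = (if m < j then j - m else 1)" for j
  have shift: "\<forall>i\<in>{1..M}. i + m \<in> {1..m + M}" by auto
  have "L' \<in> S (m + M)"
    unfolding L'_def using \<open>M \<ge> 1\<close>
    by (intro quotient_closedD[OF closed _ \<open>L \<in> S M\<close> _ is_quotientI[OF shift]]) auto
  moreover have "is_retraction (m + M) m R"
    using F unfolding is_retraction_def R_def by fastforce
  moreover have "quot (m + M) m R L' = \<psi>"
  proof -
    have "quot (m + M) m R L' = quot M m (R \<circ> (\<lambda>i. i + m)) L"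
      unfolding L'_def by (rule quot_comp[OF shift])
    also have "\<dots> = quot M m F L" by (rule quot_cong) (auto simp: R_def)
    finally show ?thesis using \<psi> by simp
  qed
  moreover have "quot (m + M) M P L' = L"
  proof -
    have "quot (m + M) M P L' = quot M M (P \<circ> (\<lambda>i. i + m)) L"
      unfolding L'_def by (rule quot_comp[OF shift])
    also have "\<dots> = L" by (rule quot_id) (auto simp: P_def \<open>setfun M L\<close>)
    finally show ?thesis .
  qed
  moreover have "\<forall>j\<in>{1..m + M}. P j \<in> {1..M}" using \<open>M \<ge> 1\<close> unfolding P_def by auto
  ultimately show ?thesis using is_quotientI by metis
qed

lemma common_lift_through_retraction:
  assumes closed: "quotient_closed S" and lifts: "common_lift_property S"
    and setfuns: "\<And>k. k \<ge> 1 \<Longrightarrow> S k \<subseteq> {\<phi>. setfun k \<phi>}"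
    and "m \<ge> 1" "\<psi> \<in> S m" "k \<ge> 1" "c \<in> S k"
  shows "\<exists>M>m. \<exists>L\<in>S M. \<exists>R. is_retraction M m R \<and> \<psi> = quot M m R L \<and> is_quotient M L k c"
proof -
  have "\<exists>M\<ge>1. \<exists>L\<in>S M. \<forall>(j, \<phi>)\<in>{(m, \<psi>), (k, c)}. is_quotient M L j \<phi>"
    using lifts[unfolded common_lift_property_def, rule_format, of "{(m, \<psi>), (k, c)}"] assms(4-)
    by auto
  then obtain M L where M: "M \<ge> 1" "L \<in> S M" "is_quotient M L m \<psi>" "is_quotient M L k c"
    by auto
  obtain L' R where L': "L' \<in> S (m + M)" "is_retraction (m + M) m R" "\<psi> = quot (m + M) m R L'"
    "is_quotient (m + M) L' M L"
    using retraction_lift[OF closed \<open>m \<ge> 1\<close> M(1,2) _ M(3)] setfuns M(1,2) by blast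
  have "m < m + M" using M(1) by simp
  then show ?thesis using L' is_quotient_trans[OF L'(4) M(4)] by blast
qed

definition interpolate :: "nat \<Rightarrow> (nat \<Rightarrow> nat) \<Rightarrow> (nat set \<Rightarrow> real) \<Rightarrow> nat \<Rightarrow> nat set \<Rightarrow> real" where
  "interpolate M R L n = quot M n (\<lambda>i. if i \<le> n then i else R i) L"

lemma retraction_into:
  assumes "is_retraction M m R" "m \<le> n" "i \<in> {1..M}"
  shows "R i \<in> {1..n}"
  using assms unfolding is_retraction_def by fastforce

lemma interpolate_is_quotient:
  assumes "is_retraction M m R" "m \<le> n"
  shows "is_quotient M L n (interpolate M R L n)"
  unfolding interpolate_def
proof (rule is_quotientI, rule ballI)
  fix i assume "i \<in> {1..M}"
  then show "(if i \<le> n then i else R i) \<in> {1..n}"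
    using retraction_into[OF assms] by auto
qed

lemma interpolate_bottom:
  assumes "is_retraction M m R"
  shows "interpolate M R L m = quot M m R L"
  unfolding interpolate_def
  by (rule quot_cong) (use assms in \<open>auto simp: is_retraction_def\<close>)

lemma interpolate_top:
  assumes "setfun M L"
  shows "interpolate M R L M = L"
  unfolding interpolate_def by (rule quot_id) (auto simp: assms)

lemma interpolate_step:
  assumes R: "is_retraction M m R" and "m \<le> n" "n < M"
  shows "is_quotient (Suc n) (interpolate M R L (Suc n)) n (interpolate M R L n)"
proof -
  define E where "E k i = (if i \<le> k then i else R i)" for k i
  define G where "G v = (if v \<le> n then v else R (Suc n))" for v
  have R_n: "R i \<in> {1..n}" if "i \<in> {1..M}" for i
    using retraction_into[OF R \<open>m \<le> n\<close> that] .
  have G: "\<forall>v\<in>{1..Suc n}. G v \<in> {1..n}"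
    using R_n[of "Suc n"] \<open>n < M\<close> unfolding G_def by auto
  have E: "\<forall>i\<in>{1..M}. E (Suc n) i \<in> {1..Suc n}"
  proof
    fix i assume "i \<in> {1..M}"
    then show "E (Suc n) i \<in> {1..Suc n}" using R_n[of i] unfolding E_def by auto
  qed
  have GE: "(G \<circ> E (Suc n)) i = E n i" if "i \<in> {1..M}" for i
    using R_n[OF that] unfolding G_def E_def by (cases "i = Suc n") auto
  have "quot (Suc n) n G (interpolate M R L (Suc n)) = quot M n (G \<circ> E (Suc n)) L"
    unfolding interpolate_def E_def[symmetric] by (rule quot_comp[OF E])
  also have "\<dots> = interpolate M R L n"
    unfolding interpolate_def E_def[symmetric] by (rule quot_cong) (use GE in blast)
  finally show ?thesis using is_quotientI[OF G] by metis
qed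

lemma countable_dense_subset:
  fixes T :: "('a \<Rightarrow> real) set"
  assumes "finite P"
  obtains D where "D \<subseteq> T" "countable D"
    "\<And>\<psi> e. \<psi> \<in> T \<Longrightarrow> e > 0 \<Longrightarrow> \<exists>\<gamma>\<in>D. \<forall>A\<in>P. \<bar>\<psi> A - \<gamma> A\<bar> < e"
proof -
  define near where "near q j \<gamma> \<longleftrightarrow> \<gamma> \<in> T \<and> (\<forall>A\<in>P. \<bar>\<gamma> A - of_rat (q A)\<bar> < inverse (real j))"
    for q :: "'a \<Rightarrow> rat" and j :: nat and \<gamma>
  define I where "I = {(q, j). q \<in> P \<rightarrow>\<^sub>E UNIV \<and> (\<exists>\<gamma>. near q j \<gamma>)}"
  define D where "D = (\<lambda>(q, j). SOME \<gamma>. near q j \<gamma>) ` I"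
  have near_D: "near q j (SOME \<gamma>. near q j \<gamma>)" if qj: "(q, j) \<in> I" for q j
  proof -
    obtain \<gamma> where "near q j \<gamma>" using qj unfolding I_def by blast
    then show ?thesis by (rule someI[of "near q j"])
  qed
  have "D \<subseteq> T" unfolding D_def using near_D by (force simp: near_def)
  moreover have "countable D"
  proof -
    have "I \<subseteq> (P \<rightarrow>\<^sub>E UNIV) \<times> UNIV" unfolding I_def by auto
    moreover have "countable ((P \<rightarrow>\<^sub>E (UNIV :: rat set)) \<times> (UNIV :: nat set))"
      using assms by (intro countable_SIGMA countable_PiE) auto
    ultimately show ?thesis unfolding D_def by (blast intro: countable_subset)
  qed
  moreover have "\<exists>\<gamma>\<in>D. \<forall>A\<in>P. \<bar>\<psi> A - \<gamma> A\<bar> < e" if "\<psi> \<in> T" "e > 0" for \<psi> e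
  proof -
    obtain j :: nat where j: "j > 0" "inverse (real j) < e / 2"
      using ex_inverse_of_nat_less[of "e / 2"] \<open>e > 0\<close> by auto
    have "\<exists>r. \<bar>\<psi> A - of_rat r\<bar> < inverse (real j)" for A
      using of_rat_dense[of "\<psi> A - inverse (real j)" "\<psi> A + inverse (real j)"] j(1)
      by (fastforce simp: abs_diff_less_iff algebra_simps)
    then obtain r where r: "\<And>A. \<bar>\<psi> A - of_rat (r A)\<bar> < inverse (real j)" by metis
    define q where "q = restrict r P"
    have "near q j \<psi>" using r \<open>\<psi> \<in> T\<close> unfolding near_def q_def by simp
    then have qj: "(q, j) \<in> I" unfolding I_def q_def by auto
    define \<gamma> where "\<gamma> = (SOME \<gamma>. near q j \<gamma>)"
    have "\<gamma> \<in> D" unfolding D_def \<gamma>_def using qj by force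
    moreover have "\<bar>\<psi> A - \<gamma> A\<bar> < e" if "A \<in> P" for A
    proof -
      have "\<bar>\<gamma> A - of_rat (q A)\<bar> < inverse (real j)" "\<bar>\<psi> A - of_rat (q A)\<bar> < inverse (real j)"
        using near_D[OF qj] \<open>near q j \<psi>\<close> that unfolding near_def \<gamma>_def by auto
      then show ?thesis using j(2) by linarith
    qed
    ultimately show ?thesis by blast
  qed
  ultimately show ?thesis using that by blast
qed

lemma countable_dense_targets:
  fixes S :: "nat \<Rightarrow> (nat set \<Rightarrow> real) set"
  assumes "S 1 \<noteq> {}"
  obtains C where "countable C" "C \<noteq> {}" "\<And>k \<gamma>. (k, \<gamma>) \<in> C \<Longrightarrow> k \<ge> 1 \<and> \<gamma> \<in> S k"
    "\<And>k \<psi> e. k \<ge> 1 \<Longrightarrow> \<psi> \<in> S k \<Longrightarrow> e > 0 \<Longrightarrow>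
      \<exists>\<gamma>. (k, \<gamma>) \<in> C \<and> (\<forall>A. A \<subseteq> {1..k} \<longrightarrow> \<bar>\<psi> A - \<gamma> A\<bar> < e)"
proof -
  have "\<exists>D. D \<subseteq> S k \<and> countable D \<and>
      (\<forall>\<psi>\<in>S k. \<forall>e>0. \<exists>\<gamma>\<in>D. \<forall>A\<in>Pow {1..k}. \<bar>\<psi> A - \<gamma> A\<bar> < e)" for k
    by (rule countable_dense_subset[of "Pow {1..k}" "S k"]) auto
  then obtain D where D: "\<And>k. D k \<subseteq> S k" "\<And>k. countable (D k)"
    "\<And>k \<psi> e. \<psi> \<in> S k \<Longrightarrow> e > 0 \<Longrightarrow> \<exists>\<gamma>\<in>D k. \<forall>A\<in>Pow {1..k}. \<bar>\<psi> A - \<gamma> A\<bar> < e"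
    by metis
  define C where "C = (SIGMA k:{1..}. D k)"
  have "countable C" unfolding C_def using D(2) by auto
  moreover obtain \<psi> where "\<psi> \<in> S 1" using assms by blast
  then have "C \<noteq> {}" using D(3)[of \<psi> 1 1] unfolding C_def by auto
  moreover have "k \<ge> 1 \<and> \<gamma> \<in> S k" if "(k, \<gamma>) \<in> C" for k \<gamma>
    using that D(1) unfolding C_def by auto
  moreover have "\<exists>\<gamma>. (k, \<gamma>) \<in> C \<and> (\<forall>A. A \<subseteq> {1..k} \<longrightarrow> \<bar>\<psi> A - \<gamma> A\<bar> < e)"
    if "k \<ge> 1" "\<psi> \<in> S k" "e > 0" for k \<psi> e
    using D(3)[of \<psi> k e] that unfolding C_def by auto
  ultimately show ?thesis using that by blast
qed

locale tower_construction =
  fixes S :: "nat \<Rightarrow> (nat set \<Rightarrow> real) set"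
    and target :: "nat \<Rightarrow> nat \<times> (nat set \<Rightarrow> real)"
  assumes S1_nonempty: "S 1 \<noteq> {}"
    and setfuns: "\<And>k. k \<ge> 1 \<Longrightarrow> S k \<subseteq> {\<phi>. setfun k \<phi>}"
    and closed: "quotient_closed S"
    and lifts: "common_lift_property S"
    and target_in_S: "\<And>p. fst (target p) \<ge> 1 \<and> snd (target p) \<in> S (fst (target p))"
begin

text \<open>Stage p is (m_p, L_p, R_p), where L_p lifts L_(p-1) along the retraction R_p;
  R_0 is a dummy.\<close>
primrec spine :: "nat \<Rightarrow> nat \<times> (nat set \<Rightarrow> real) \<times> (nat \<Rightarrow> nat)" where
  "spine 0 = (1, SOME \<phi>. \<phi> \<in> S 1, id)"
| "spine (Suc p) = (case spine p of (m, T, _) \<Rightarrow>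
     SOME (M, L, R). m < M \<and> L \<in> S M \<and> is_retraction M m R \<and> T = quot M m R L \<and>
       is_quotient M L (fst (target p)) (snd (target p)))"

definition spine_dim :: "nat \<Rightarrow> nat" where "spine_dim p = fst (spine p)"
definition spine_fun :: "nat \<Rightarrow> nat set \<Rightarrow> real" where "spine_fun p = fst (snd (spine p))"
definition spine_ret :: "nat \<Rightarrow> nat \<Rightarrow> nat" where "spine_ret p = snd (snd (spine p))"

lemma spine_step:
  assumes "spine_dim p \<ge> 1" "spine_fun p \<in> S (spine_dim p)"
  shows "spine_dim p < spine_dim (Suc p) \<and> spine_fun (Suc p) \<in> S (spine_dim (Suc p)) \<and>
    is_retraction (spine_dim (Suc p)) (spine_dim p) (spine_ret (Suc p)) \<and>
    spine_fun p = quot (spine_dim (Suc p)) (spine_dim p) (spine_ret (Suc p)) (spine_fun (Suc p)) \<and>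
    is_quotient (spine_dim (Suc p)) (spine_fun (Suc p)) (fst (target p)) (snd (target p))"
proof -
  obtain m T R0 where p: "spine p = (m, T, R0)" by (metis prod_cases3)
  define P where "P = (\<lambda>(M, L, R). m < M \<and> L \<in> S M \<and> is_retraction M m R \<and> T = quot M m R L \<and>
       is_quotient M L (fst (target p)) (snd (target p)))"
  have "\<exists>M>m. \<exists>L\<in>S M. \<exists>R. is_retraction M m R \<and> T = quot M m R L \<and>
      is_quotient M L (fst (target p)) (snd (target p))"
    using common_lift_through_retraction[OF closed lifts setfuns] assms target_in_S p
    unfolding spine_dim_def spine_fun_def by simp
  then have "\<exists>x. P x" unfolding P_def by auto
  then have "P (spine (Suc p))" unfolding spine.simps p by (simp add: P_def someI_ex)
  moreover obtain M L R where "spine (Suc p) = (M, L, R)" by (metis prod_cases3)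
  ultimately show ?thesis using p
    unfolding P_def spine_dim_def spine_fun_def spine_ret_def by simp
qed

lemma spine_in_S: "spine_dim p \<ge> 1 \<and> spine_fun p \<in> S (spine_dim p)"
proof (induction p)
  case 0
  then show ?case
    using S1_nonempty by (simp add: spine_dim_def spine_fun_def some_in_eq)
next
  case (Suc p)
  then show ?case using spine_step[of p] by auto
qed

lemma
  shows spine_dim_less: "spine_dim p < spine_dim (Suc p)"
    and spine_ret_retraction: "is_retraction (spine_dim (Suc p)) (spine_dim p) (spine_ret (Suc p))"
    and spine_fun_quot:
      "spine_fun p = quot (spine_dim (Suc p)) (spine_dim p) (spine_ret (Suc p)) (spine_fun (Suc p))"
    and target_quot_spine:
      "is_quotient (spine_dim (Suc p)) (spine_fun (Suc p)) (fst (target p)) (snd (target p))"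
  using spine_step[of p] spine_in_S[of p] by blast+

lemma strict_mono_spine_dim: "strict_mono spine_dim"
  using spine_dim_less by (simp add: strict_mono_Suc_iff)

definition block :: "nat \<Rightarrow> nat \<Rightarrow> nat set \<Rightarrow> real" where
  "block p = interpolate (spine_dim (Suc p)) (spine_ret (Suc p)) (spine_fun (Suc p))"

lemma block_lower: "block p (spine_dim p) = spine_fun p"
  unfolding block_def interpolate_bottom[OF spine_ret_retraction] by (rule spine_fun_quot[symmetric])

lemma block_upper: "block p (spine_dim (Suc p)) = spine_fun (Suc p)"
  unfolding block_def using setfuns spine_in_S[of "Suc p"] by (auto intro: interpolate_top)

definition filled_tower :: "nat \<Rightarrow> nat set \<Rightarrow> real" where
  "filled_tower n = block (LEAST p. n \<le> spine_dim (Suc p)) n"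

text \<open>Consecutive blocks overlap only at a spine dimension, where both give the spine
  setfunction itself.\<close>
lemma filled_tower_eq_block:
  assumes "spine_dim p \<le> n" "n \<le> spine_dim (Suc p)"
  shows "filled_tower n = block p n"
proof -
  define p' where "p' = (LEAST p. n \<le> spine_dim (Suc p))"
  have "p' \<le> p" "n \<le> spine_dim (Suc p')"
    unfolding p'_def using assms(2) by (rule Least_le, rule LeastI)
  show ?thesis
  proof (cases "p' = p")
    case True
    then show ?thesis unfolding filled_tower_def p'_def by simp
  next
    case False
    then have "spine_dim (Suc p') \<le> spine_dim p"
      using \<open>p' \<le> p\<close> strict_mono_less_eq[OF strict_mono_spine_dim] by simp
    then have n: "n = spine_dim p" "spine_dim (Suc p') = spine_dim p"
      using assms \<open>n \<le> spine_dim (Suc p')\<close> by auto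
    then have "p = Suc p'" using strict_mono_eq[OF strict_mono_spine_dim] by simp
    have n': "n = spine_dim (Suc p')" using n by simp
    have "filled_tower n = block p' n" unfolding filled_tower_def p'_def ..
    also have "\<dots> = spine_fun (Suc p')" using block_upper n' by simp
    also have "\<dots> = block p n" using block_lower \<open>p = Suc p'\<close> n' by simp
    finally show ?thesis .
  qed
qed

lemma block_containing:
  assumes "n \<ge> 1"
  obtains p where "spine_dim p \<le> n" "n < spine_dim (Suc p)"
proof -
  define p where "p = (LEAST p. n < spine_dim (Suc p))"
  have "n < spine_dim (Suc n)"
    using strict_mono_imp_increasing[OF strict_mono_spine_dim, of "Suc n"] by simp
  then have "n < spine_dim (Suc p)" unfolding p_def by (rule LeastI)
  moreover have "spine_dim p \<le> n"
  proof (cases p)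
    case 0
    then show ?thesis using assms by (simp add: spine_dim_def)
  next
    case (Suc q)
    then show ?thesis using not_less_Least[of q "\<lambda>p. n < spine_dim (Suc p)"] p_def by simp
  qed
  ultimately show ?thesis using that by blast
qed

lemma filled_tower_in_S:
  assumes "n \<ge> 1"
  shows "filled_tower n \<in> S n"
proof -
  obtain p where p: "spine_dim p \<le> n" "n < spine_dim (Suc p)"
    using assms by (rule block_containing)
  have "is_quotient (spine_dim (Suc p)) (spine_fun (Suc p)) n (block p n)"
    unfolding block_def using interpolate_is_quotient[OF spine_ret_retraction p(1)] .
  then have "block p n \<in> S n"
    using quotient_closedD[OF closed _ _ assms] spine_in_S[of "Suc p"] by blast
  moreover have "filled_tower n = block p n"
    using p by (intro filled_tower_eq_block) simp_all
  ultimately show ?thesis by simp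
qed

lemma tower_filled_tower: "tower filled_tower"
  unfolding tower_def
proof (intro allI impI)
  fix n :: nat assume "n \<ge> 1"
  then obtain p where p: "spine_dim p \<le> n" "n < spine_dim (Suc p)"
    by (rule block_containing)
  have "is_quotient (Suc n) (block p (Suc n)) n (block p n)"
    unfolding block_def using interpolate_step[OF spine_ret_retraction p] .
  moreover have "filled_tower n = block p n"
    using p by (intro filled_tower_eq_block) simp_all
  moreover have "filled_tower (Suc n) = block p (Suc n)"
    using p by (intro filled_tower_eq_block) simp_all
  ultimately show "is_quotient (Suc n) (filled_tower (Suc n)) n (filled_tower n)" by simp
qed

lemma target_quot_filled_tower:
  "is_quotient (spine_dim (Suc p)) (filled_tower (spine_dim (Suc p))) (fst (target p)) (snd (target p))"
proof -
  have "filled_tower (spine_dim (Suc p)) = block p (spine_dim (Suc p))"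
    using spine_dim_less[of p] by (intro filled_tower_eq_block) simp_all
  then show ?thesis using target_quot_spine[of p] block_upper[of p] by simp
qed

lemma dense_in_setfuns_filled_tower:
  assumes "k \<ge> 1"
    and dense_targets: "\<And>\<psi> e. \<psi> \<in> S k \<Longrightarrow> e > 0 \<Longrightarrow>
      \<exists>p. fst (target p) = k \<and> (\<forall>A. A \<subseteq> {1..k} \<longrightarrow> \<bar>\<psi> A - snd (target p) A\<bar> < e)"
  shows "dense_in_setfuns k (\<Union>n\<in>{1..}. Qk k n (filled_tower n)) (S k)"
  unfolding dense_in_setfuns_def
proof (intro conjI subsetI ballI allI impI)
  fix \<gamma> assume "\<gamma> \<in> (\<Union>n\<in>{1..}. Qk k n (filled_tower n))"
  then obtain n where "n \<ge> 1" "is_quotient n (filled_tower n) k \<gamma>"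
    unfolding Qk_def by auto
  then show "\<gamma> \<in> S k"
    using quotient_closedD[OF closed] filled_tower_in_S \<open>k \<ge> 1\<close> by blast
next
  fix \<psi> and e :: real assume "\<psi> \<in> S k" "e > 0"
  then obtain p where p: "fst (target p) = k"
    "\<forall>A. A \<subseteq> {1..k} \<longrightarrow> \<bar>\<psi> A - snd (target p) A\<bar> < e"
    using dense_targets by blast
  moreover have "snd (target p) \<in> (\<Union>n\<in>{1..}. Qk k n (filled_tower n))"
    using target_quot_filled_tower[of p] spine_in_S[of "Suc p"] p(1) unfolding Qk_def by auto
  ultimately show "\<exists>\<gamma>\<in>(\<Union>n\<in>{1..}. Qk k n (filled_tower n)).
      \<forall>A. A \<subseteq> {1..k} \<longrightarrow> \<bar>\<psi> A - \<gamma> A\<bar> < e"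
    by blast
qed

end

theorem lemma2p6:
  fixes S :: "nat \<Rightarrow> (nat set \<Rightarrow> real) set"
  assumes "\<And>k. k \<ge> 1 \<Longrightarrow> S k \<noteq> {}"
    and "\<And>k. k \<ge> 1 \<Longrightarrow> S k \<subseteq> {\<phi>. setfun k \<phi>}"
    and "quotient_closed S"
    and "common_lift_property S"
  shows "\<exists>\<phi>. (\<forall>k\<ge>1. \<phi> k \<in> S k) \<and> tower \<phi> \<and>
           (\<forall>k\<ge>1. dense_in_setfuns k (\<Union>n\<in>{1..}. Qk k n (\<phi> n)) (S k))"
proof -
  obtain C where C: "countable C" "C \<noteq> {}" "\<And>k \<gamma>. (k, \<gamma>) \<in> C \<Longrightarrow> k \<ge> 1 \<and> \<gamma> \<in> S k"
    "\<And>k \<psi> e. k \<ge> 1 \<Longrightarrow> \<psi> \<in> S k \<Longrightarrow> e > 0 \<Longrightarrow>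
      \<exists>\<gamma>. (k, \<gamma>) \<in> C \<and> (\<forall>A. A \<subseteq> {1..k} \<longrightarrow> \<bar>\<psi> A - \<gamma> A\<bar> < e)"
    using countable_dense_targets[of S] assms(1) by auto
  have "fst (from_nat_into C p) \<ge> 1 \<and> snd (from_nat_into C p) \<in> S (fst (from_nat_into C p))" for p
    using C(3) from_nat_into[OF C(2), of p] by (metis prod.collapse)
  then interpret tower_construction S "from_nat_into C"
    using assms by unfold_locales auto
  have "\<exists>p. fst (from_nat_into C p) = k \<and>
      (\<forall>A. A \<subseteq> {1..k} \<longrightarrow> \<bar>\<psi> A - snd (from_nat_into C p) A\<bar> < e)"
    if approximated: "k \<ge> 1" "\<psi> \<in> S k" "e > 0" for k \<psi> e
  proof -
    obtain \<gamma> where "(k, \<gamma>) \<in> C" "\<forall>A. A \<subseteq> {1..k} \<longrightarrow> \<bar>\<psi> A - \<gamma> A\<bar> < e"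
      using C(4)[OF approximated] by blast
    moreover obtain p where "from_nat_into C p = (k, \<gamma>)"
      using from_nat_into_surj[OF C(1)] calculation(1) by blast
    ultimately show ?thesis by (intro exI[of _ p]) auto
  qed
  then show ?thesis
    using filled_tower_in_S tower_filled_tower dense_in_setfuns_filled_tower
    by (intro exI[of _ filled_tower]) auto
qed

end
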